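(* Let $k\ge2$, $d>0$ with $2d/k\le1$, and $t\ge1$. Let $T$ be a Galton–Watson tree of depth $t$ rooted at $u$ with $\mathrm{Poisson}(d)$ offspring distribution, let $R$ be the set of vertices of $T$ at depth $t$, and, independently of $T$, assign i.i.d. uniform labels $X_v\in[k]$ to the vertices of $T$; for every edge $(i,j)$ of $T$ let $Y_{ij}=\mathbf 1\{X_i=X_j\}$. Let $P^{(t)}_x$ denote the joint law of $(T,X_R,\{Y_e\}_{e\in E(T)})$ conditioned on $X_u=x$. Then $$\max_{x,x'\in[k]}d_{\mathrm{TV}}\bigl(P^{(t)}_x,P^{(t)}_{x'}\bigr)\to0\qquad\text{as }t\to\infty.$$
   Context: $d_{\mathrm{TV}}$ denotes total variation distance; $[k]=\{1,\dots,k\}$. *)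

theory Defs
  imports "HOL-Probability.Probability"
begin

datatype tree = Node "tree list"

primrec gw_tree :: "real \<Rightarrow> nat \<Rightarrow> tree pmf" where
  "gw_tree d 0 = return_pmf (Node [])"
| "gw_tree d (Suc t) =
     do { n \<leftarrow> poisson_pmf d; cs \<leftarrow> replicate_pmf n (gw_tree d t); return_pmf (Node cs) }"

datatype ltree = LNode nat "ltree list"

fun lroot :: "ltree \<Rightarrow> nat" where
  "lroot (LNode x _) = x"

primrec seq_pmf :: "'a pmf list \<Rightarrow> 'a list pmf" where
  "seq_pmf [] = return_pmf []"
| "seq_pmf (p # ps) = do { x \<leftarrow> p; xs \<leftarrow> seq_pmf ps; return_pmf (x # xs) }"

fun label_pmf :: "nat \<Rightarrow> nat \<Rightarrow> tree \<Rightarrow> ltree pmf" where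
  "label_pmf k x (Node cs) =
     do { ls \<leftarrow> seq_pmf (map (\<lambda>c. do { y \<leftarrow> pmf_of_set {1..k}; label_pmf k y c }) cs);
          return_pmf (LNode x ls) }"

text \<open>Observations: the tree T, the labels X_R of the depth-t vertices, and the
  edge indicators Y_ij = [X_i = X_j].  An internal (depth < t) vertex is
  recorded as ONode with the list of (edge indicator, child subtree); a vertex
  at depth t is recorded as OLeaf with its label.  This encodes the triple
  (T, X_R, Y) bijectively.\<close>
datatype obs = OLeaf nat | ONode "(bool \<times> obs) list"

fun observe :: "nat \<Rightarrow> ltree \<Rightarrow> obs" where
  "observe 0 (LNode x cs) = OLeaf x"
| "observe (Suc t) (LNode x cs) = ONode (map (\<lambda>c. (lroot c = x, observe t c)) cs)"

text \<open>P_x^(t): joint law of (T, X_R, Y) given X_u = x (X_u is independent of T and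
  of the other labels, so conditioning amounts to fixing the root label).\<close>
definition P_obs :: "real \<Rightarrow> nat \<Rightarrow> nat \<Rightarrow> nat \<Rightarrow> obs pmf" where
  "P_obs d k t x =
     do { T \<leftarrow> gw_tree d t; L \<leftarrow> label_pmf k x T; return_pmf (observe t L) }"

definition tv_dist :: "'a pmf \<Rightarrow> 'a pmf \<Rightarrow> real" where
  "tv_dist p q = (SUP A. \<bar>measure_pmf.prob p A - measure_pmf.prob q A\<bar>)"

end

theory Submission
  imports Defs
begin

text \<open>
  We couple \<open>P\<^sub>x\<^sup>(\<^sup>t\<^sup>)\<close> with \<open>P\<^sub>x\<^sub>'\<^sup>(\<^sup>t\<^sup>)\<close> along the tree. A child of the root gets label
  \<open>y\<close> in the first copy and \<open>\<sigma> y\<close> in the second, where \<open>\<sigma>\<close> swaps \<open>x\<close> and \<open>x'\<close>; this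
  preserves the uniform law and the edge indicator, so the two copies can only differ
  when \<open>y \<in> {x, x'}\<close>, and there we recurse. If \<open>s\<^sub>t\<close> bounds the failure probability
  at depth \<open>t\<close>, a child subtree fails with probability at most \<open>2 s\<^sub>t / k\<close>, and
  averaging over the Poisson number of independent children gives
  \<open>s\<^sub>t\<^sub>+\<^sub>1 = 1 - exp (-2 d s\<^sub>t / k)\<close>. Since \<open>2d/k \<le> 1\<close> and \<open>1 - exp (-s) < s\<close> for
  \<open>s > 0\<close>, this sequence decreases to the only fixed point \<open>0\<close> in \<open>[0, 1]\<close>: it is the
  survival probability of a critical or subcritical Poisson branching process.
\<close>

definition coupled_within :: "'a pmf \<Rightarrow> 'a pmf \<Rightarrow> real \<Rightarrow> bool" where
  "coupled_within p q e \<longleftrightarrow> (\<exists>c. map_pmf fst c = p \<and> map_pmf snd c = q \<and>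
      measure_pmf.prob c {z. fst z \<noteq> snd z} \<le> e)"

lemma coupled_within_refl: "coupled_within p p 0"
  unfolding coupled_within_def
  by (rule exI[of _ "map_pmf (\<lambda>a. (a, a)) p"]) (simp add: map_pmf_comp)

lemma coupled_within_one: "coupled_within p q 1"
  unfolding coupled_within_def
  by (rule exI[of _ "pair_pmf p q"]) (simp add: map_fst_pair_pmf map_snd_pair_pmf)

lemma coupled_within_map:
  assumes "coupled_within p q e"
  shows "coupled_within (map_pmf h p) (map_pmf h q) e"
proof -
  obtain c where c: "map_pmf fst c = p" "map_pmf snd c = q"
    "measure_pmf.prob c {z. fst z \<noteq> snd z} \<le> e"
    using assms unfolding coupled_within_def by blast
  let ?c = "map_pmf (map_prod h h) c"
  have "measure_pmf.prob ?c {z. fst z \<noteq> snd z} = measure_pmf.prob c {z. h (fst z) \<noteq> h (snd z)}"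
    by (simp add: vimage_def map_prod_def case_prod_beta)
  also have "\<dots> \<le> measure_pmf.prob c {z. fst z \<noteq> snd z}"
    by (rule measure_pmf.finite_measure_mono) auto
  finally show ?thesis
    unfolding coupled_within_def using c
    by (intro exI[of _ ?c]) (auto simp: map_pmf_comp)
qed

lemma tv_dist_le_if_coupled_within:
  assumes "coupled_within p q e"
  shows "tv_dist p q \<le> e"
proof -
  obtain c where c: "map_pmf fst c = p" "map_pmf snd c = q"
    "measure_pmf.prob c {z. fst z \<noteq> snd z} \<le> e"
    using assms unfolding coupled_within_def by blast
  have transfer: "measure_pmf.prob c {z. f z \<in> A} \<le> measure_pmf.prob c {z. g z \<in> A} + measure_pmf.prob c {z. f z \<noteq> g z}"
    for f g :: "'a \<times> 'a \<Rightarrow> 'a" and A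
  proof -
    have "measure_pmf.prob c {z. f z \<in> A} \<le> measure_pmf.prob c ({z. g z \<in> A} \<union> {z. f z \<noteq> g z})"
      by (intro measure_pmf.finite_measure_mono) auto
    also have "\<dots> \<le> measure_pmf.prob c {z. g z \<in> A} + measure_pmf.prob c {z. f z \<noteq> g z}"
      by (rule measure_Un_le) auto
    finally show ?thesis .
  qed
  have "\<bar>measure_pmf.prob p A - measure_pmf.prob q A\<bar> \<le> e" for A
  proof -
    have "measure_pmf.prob p A = measure_pmf.prob c {z. fst z \<in> A}"
      "measure_pmf.prob q A = measure_pmf.prob c {z. snd z \<in> A}"
      using c(1,2) by (auto simp: vimage_def)
    then show ?thesis
      using transfer[of fst A snd] transfer[of snd A fst] c(3) by (simp add: abs_le_iff eq_commute)
  qed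
  then show ?thesis
    unfolding tv_dist_def by (intro cSUP_least) auto
qed

lemma tv_dist_nonneg: "0 \<le> tv_dist p q"
proof -
  have "\<bar>measure_pmf.prob p A - measure_pmf.prob q A\<bar> \<le> 1" for A
    using measure_pmf.prob_le_1[of p A] measure_pmf.prob_le_1[of q A]
      measure_nonneg[of "measure_pmf p" A] measure_nonneg[of "measure_pmf q" A]
    unfolding abs_le_iff by linarith
  then have "bdd_above (range (\<lambda>A. \<bar>measure_pmf.prob p A - measure_pmf.prob q A\<bar>))"
    by (intro bdd_aboveI[of _ 1]) auto
  then have "\<bar>measure_pmf.prob p {} - measure_pmf.prob q {}\<bar> \<le> tv_dist p q"
    unfolding tv_dist_def by (rule cSUP_upper[rotated]) simp
  then show ?thesis by simp
qed

lemma measure_pmf_prob_bind: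
  "measure_pmf.prob (bind_pmf p f) A = measure_pmf.expectation p (\<lambda>x. measure_pmf.prob (f x) A)"
  unfolding measure_pmf_bind
  by (rule measure_pmf.measure_bind[where N="count_space UNIV"])
    (auto simp: space_subprob_algebra intro: prob_space_imp_subprob_space prob_space_measure_pmf)

lemma coupled_within_bind:
  assumes "\<And>y. y \<in> set_pmf p \<Longrightarrow> coupled_within (f y) (g y) (e y)"
    and "\<And>y. 0 \<le> e y" "\<And>y. e y \<le> 1"
    and "measure_pmf.expectation p e \<le> \<epsilon>"
  shows "coupled_within (bind_pmf p f) (bind_pmf p g) \<epsilon>"
proof -
  let ?D = "{z. fst z \<noteq> snd z}"
  define C where "C y = (SOME c. map_pmf fst c = f y \<and> map_pmf snd c = g y \<and>
      measure_pmf.prob c ?D \<le> e y)" for y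
  have C: "map_pmf fst (C y) = f y \<and> map_pmf snd (C y) = g y \<and> measure_pmf.prob (C y) ?D \<le> e y"
    if "y \<in> set_pmf p" for y
    unfolding C_def using assms(1)[OF that] unfolding coupled_within_def by (rule someI_ex)
  have "map_pmf fst (bind_pmf p C) = bind_pmf p f" "map_pmf snd (bind_pmf p C) = bind_pmf p g"
    unfolding map_bind_pmf using C by (auto intro: bind_pmf_cong)
  moreover have "measure_pmf.prob (bind_pmf p C) ?D \<le> measure_pmf.expectation p e"
    unfolding measure_pmf_prob_bind using C assms(2,3)
    by (intro integral_mono_AE measure_pmf.integrable_const_bound[where B=1])
      (auto simp: AE_measure_pmf_iff)
  ultimately show ?thesis
    unfolding coupled_within_def using assms(4) by force
qed

lemma measure_pmf_prob_pair_Times: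
  "measure_pmf.prob (pair_pmf M N) (A \<times> B) = measure_pmf.prob M A * measure_pmf.prob N B"
proof -
  have "measure_pmf.prob (pair_pmf M N) (A \<times> B)
      = measure_pmf.prob (pair_pmf M N) ((A \<inter> set_pmf M) \<times> (B \<inter> set_pmf N))"
    by (subst (1 2) measure_Int_set_pmf[symmetric]) (simp add: Times_Int_Times)
  also have "\<dots> = measure_pmf.prob M A * measure_pmf.prob N B"
    by (simp add: measure_pmf_prob_product measure_Int_set_pmf)
  finally show ?thesis .
qed

lemma measure_pmf_prob_Collect_neg:
  "measure_pmf.prob p {x. \<not> P x} = 1 - measure_pmf.prob p {x. P x}"
  using measure_pmf.prob_neg[of p P] by simp

lemma coupled_within_pair:
  assumes "coupled_within p q e1" "coupled_within p' q' e2" "e1 \<le> 1" "e2 \<le> 1"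
  shows "coupled_within (pair_pmf p p') (pair_pmf q q') (1 - (1 - e1) * (1 - e2))"
proof -
  obtain c1 where c1: "map_pmf fst c1 = p" "map_pmf snd c1 = q"
    "measure_pmf.prob c1 {z. fst z \<noteq> snd z} \<le> e1"
    using assms(1) unfolding coupled_within_def by blast
  obtain c2 where c2: "map_pmf fst c2 = p'" "map_pmf snd c2 = q'"
    "measure_pmf.prob c2 {z. fst z \<noteq> snd z} \<le> e2"
    using assms(2) unfolding coupled_within_def by blast
  let ?E = "{z. fst z = snd z}"
  let ?c = "map_pmf (\<lambda>((a, b), (a', b')). ((a, a'), (b, b'))) (pair_pmf c1 c2)"
  have fst: "map_pmf fst ?c = pair_pmf p p'" and snd: "map_pmf snd ?c = pair_pmf q q'"
    unfolding c1(1,2)[symmetric] c2(1,2)[symmetric] map_pair[symmetric]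
    by (auto simp: map_pmf_comp case_prod_unfold intro!: map_pmf_cong)
  have transpose_diag: "(\<lambda>((a, b), (a', b')). ((a, a'), (b, b'))) -` ?E = ?E \<times> ?E"
    by auto
  have "measure_pmf.prob ?c ?E = measure_pmf.prob (pair_pmf c1 c2) (?E \<times> ?E)"
    unfolding measure_map_pmf transpose_diag ..
  also have "\<dots> = (1 - measure_pmf.prob c1 {z. fst z \<noteq> snd z}) * (1 - measure_pmf.prob c2 {z. fst z \<noteq> snd z})"
    by (simp add: measure_pmf_prob_pair_Times measure_pmf_prob_Collect_neg)
  also have "\<dots> \<ge> (1 - e1) * (1 - e2)"
    using c1(3) c2(3) assms(3,4) measure_pmf.prob_le_1
    by (intro mult_mono) auto
  finally have "measure_pmf.prob ?c {z. fst z \<noteq> snd z} \<le> 1 - (1 - e1) * (1 - e2)"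
    using measure_pmf_prob_Collect_neg[of ?c "\<lambda>z. fst z = snd z"] by linarith
  then show ?thesis
    unfolding coupled_within_def using fst snd by blast
qed

lemma replicate_pmf_Suc_pair:
  "replicate_pmf (Suc n) p = map_pmf (\<lambda>(x, xs). x # xs) (pair_pmf p (replicate_pmf n p))"
  by (simp add: pair_pmf_def map_bind_pmf)

lemma coupled_within_replicate:
  assumes "coupled_within p q e" "0 \<le> e" "e \<le> 1"
  shows "coupled_within (replicate_pmf n p) (replicate_pmf n q) (1 - (1 - e) ^ n)"
proof (induction n)
  case 0
  then show ?case using coupled_within_refl by simp
next
  case (Suc n)
  have "0 \<le> (1 - e) ^ n" using assms by simp
  then have "coupled_within (replicate_pmf (Suc n) p) (replicate_pmf (Suc n) q)
      (1 - (1 - e) * (1 - (1 - (1 - e) ^ n)))"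
    unfolding replicate_pmf_Suc_pair using assms Suc by (intro coupled_within_map coupled_within_pair) auto
  then show ?case by simp
qed

lemma expectation_poisson_power:
  assumes "0 < d" "0 \<le> a" "a \<le> 1"
  shows "measure_pmf.expectation (poisson_pmf d) (\<lambda>n. a ^ n) = exp (- d * (1 - a))"
proof -
  have sums: "(\<lambda>n. pmf (poisson_pmf d) n * a ^ n) sums exp (- d * (1 - a))"
  proof -
    have "(\<lambda>n. exp (-d) * ((d * a) ^ n /\<^sub>R fact n)) sums (exp (-d) * exp (d * a))"
      by (intro sums_mult exp_converges)
    moreover have "exp (-d) * exp (d * a) = exp (- d * (1 - a))"
      by (simp add: mult_exp_exp algebra_simps)
    moreover have "(\<lambda>n. exp (-d) * ((d * a) ^ n /\<^sub>R fact n)) = (\<lambda>n. pmf (poisson_pmf d) n * a ^ n)"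
      using assms by (auto simp: power_mult_distrib divide_simps)
    ultimately show ?thesis by simp
  qed
  have int: "integrable (measure_pmf (poisson_pmf d)) (\<lambda>n. a ^ n)"
    using assms by (intro measure_pmf.integrable_const_bound[where B=1]) (auto intro: power_le_one)
  have "ennreal (measure_pmf.expectation (poisson_pmf d) (\<lambda>n. a ^ n))
      = (\<integral>\<^sup>+ n. ennreal (a ^ n) \<partial>measure_pmf (poisson_pmf d))"
    using assms by (intro nn_integral_eq_integral[OF int, symmetric]) auto
  also have "\<dots> = (\<Sum>n. ennreal (pmf (poisson_pmf d) n * a ^ n))"
    using assms
    by (simp add: nn_integral_measure_pmf nn_integral_count_space_nat ennreal_mult[symmetric])
  also have "\<dots> = ennreal (exp (- d * (1 - a)))"
    using sums assms
    by (intro suminf_ennreal2[of "\<lambda>n. pmf (poisson_pmf d) n * a ^ n", THEN trans]) (auto simp: sums_iff)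
  finally show ?thesis
    using assms by (subst (asm) ennreal_inj) (auto intro: integral_nonneg_AE)
qed

lemma map_seq_pmf: "map_pmf (map h) (seq_pmf ps) = seq_pmf (map (map_pmf h) ps)"
proof (induction ps)
  case (Cons p ps)
  show ?case by (simp add: Cons.IH[symmetric] bind_map_pmf map_bind_pmf)
qed simp

lemma bind_replicate_seq_pmf:
  "bind_pmf (replicate_pmf n p) (\<lambda>cs. seq_pmf (map f cs)) = replicate_pmf n (bind_pmf p f)"
proof (induction n)
  case 0
  then show ?case by (simp add: bind_return_pmf)
next
  case (Suc n)
  have "bind_pmf (replicate_pmf (Suc n) p) (\<lambda>cs. seq_pmf (map f cs))
      = bind_pmf p (\<lambda>c. bind_pmf (f c) (\<lambda>x. bind_pmf
          (bind_pmf (replicate_pmf n p) (\<lambda>cs. seq_pmf (map f cs))) (\<lambda>xs. return_pmf (x # xs))))"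
    by (simp add: bind_assoc_pmf bind_return_pmf bind_commute_pmf[of "replicate_pmf n p"])
  then show ?case by (simp add: Suc bind_assoc_pmf)
qed

lemma lroot_label_pmf: "l \<in> set_pmf (label_pmf k y c) \<Longrightarrow> lroot l = y"
  by (cases c) auto

definition child_obs :: "real \<Rightarrow> nat \<Rightarrow> nat \<Rightarrow> nat \<Rightarrow> (bool \<times> obs) pmf" where
  "child_obs d k t x = bind_pmf (pmf_of_set {1..k}) (\<lambda>y. map_pmf (\<lambda>ob. (y = x, ob)) (P_obs d k t y))"

lemma P_obs_Suc:
  "P_obs d k (Suc t) x = bind_pmf (poisson_pmf d) (\<lambda>n. map_pmf ONode (replicate_pmf n (child_obs d k t x)))"
proof -
  define labelled where "labelled c = bind_pmf (pmf_of_set {1..k}) (\<lambda>y. label_pmf k y c)" for c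
  define g where "g c = map_pmf (\<lambda>l. (lroot l = x, observe t l)) (labelled c)" for c
  have observe_Node: "bind_pmf (label_pmf k x (Node cs)) (\<lambda>L. return_pmf (observe (Suc t) L))
      = map_pmf ONode (seq_pmf (map g cs))" for cs
  proof -
    have "map_pmf ONode (seq_pmf (map g cs))
        = map_pmf ONode (map_pmf (map (\<lambda>l. (lroot l = x, observe t l))) (seq_pmf (map labelled cs)))"
      unfolding map_seq_pmf by (simp add: g_def[abs_def] o_def)
    then show ?thesis
      by (simp add: labelled_def[abs_def] bind_assoc_pmf bind_return_pmf map_pmf_comp map_pmf_def[symmetric])
  qed
  have "bind_pmf (gw_tree d t) g = bind_pmf (gw_tree d t) (\<lambda>c. bind_pmf (pmf_of_set {1..k})
      (\<lambda>y. map_pmf (\<lambda>l. (y = x, observe t l)) (label_pmf k y c)))"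
    unfolding g_def labelled_def map_bind_pmf
    by (intro bind_pmf_cong refl map_pmf_cong) (auto dest: lroot_label_pmf)
  also have "\<dots> = child_obs d k t x"
    unfolding child_obs_def P_obs_def
    by (subst bind_commute_pmf) (simp add: map_bind_pmf map_pmf_comp map_pmf_def bind_assoc_pmf bind_return_pmf)
  finally have children: "bind_pmf (gw_tree d t) g = child_obs d k t x" .
  show ?thesis
    unfolding P_obs_def children[symmetric] bind_replicate_seq_pmf[symmetric] map_bind_pmf
    by (simp only: o_def gw_tree.simps bind_assoc_pmf bind_return_pmf observe_Node)
qed

text \<open>Swapping the labels \<open>x\<close> and \<open>x'\<close> of the child keeps its law and its edge indicator.\<close>
lemma coupled_within_child_obs:
  assumes x: "x \<in> {1..k}" "x' \<in> {1..k}"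
    and subtrees: "\<And>y y'. y \<in> {1..k} \<Longrightarrow> y' \<in> {1..k} \<Longrightarrow> coupled_within (P_obs d k t y) (P_obs d k t y') \<epsilon>"
    and \<epsilon>: "0 \<le> \<epsilon>" "\<epsilon> \<le> 1"
  shows "coupled_within (child_obs d k t x) (child_obs d k t x') (2 * \<epsilon> / k)"
proof -
  define \<sigma> where "\<sigma> = Transposition.transpose x x'"
  have \<sigma>_perm: "\<sigma> ` {1..k} = {1..k}"
    using x unfolding \<sigma>_def by simp
  have k: "{1..k} \<noteq> {}" using x by auto
  then have support: "set_pmf (pmf_of_set {1..k}) = {1..k}" by simp
  have uniform: "map_pmf \<sigma> (pmf_of_set {1..k}) = pmf_of_set {1..k}"
    using map_pmf_of_set_inj[of \<sigma> "{1..k}"] \<sigma>_perm k by (simp add: \<sigma>_def)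
  have "child_obs d k t x' = bind_pmf (pmf_of_set {1..k})
      (\<lambda>y. map_pmf (\<lambda>ob. (\<sigma> y = x', ob)) (P_obs d k t (\<sigma> y)))"
    unfolding child_obs_def by (subst uniform[symmetric]) (simp add: bind_map_pmf)
  also have "(\<lambda>y. \<sigma> y = x') = (\<lambda>y. y = x)"
    unfolding \<sigma>_def by (auto simp: transpose_eq_iff)
  finally have child_x': "child_obs d k t x' = bind_pmf (pmf_of_set {1..k})
      (\<lambda>y. map_pmf (\<lambda>ob. (y = x, ob)) (P_obs d k t (\<sigma> y)))" .
  define e where "e y = (if y \<in> {x, x'} then \<epsilon> else 0)" for y
  have coupled_e: "coupled_within (P_obs d k t y) (P_obs d k t (\<sigma> y)) (e y)"
    if "y \<in> set_pmf (pmf_of_set {1..k})" for y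
  proof (cases "y \<in> {x, x'}")
    case True
    have y: "y \<in> {1..k}" using that unfolding support .
    then have "\<sigma> y \<in> {1..k}" using \<sigma>_perm by blast
    then show ?thesis using subtrees[OF y] True by (simp add: e_def)
  next
    case False
    then have "\<sigma> y = y" by (simp add: \<sigma>_def)
    then show ?thesis using coupled_within_refl False by (simp add: e_def)
  qed
  have "sum e {1..k} = (\<Sum>y\<in>{1..k} \<inter> {x, x'}. \<epsilon>)"
    unfolding e_def by (rule sum.inter_restrict[symmetric]) simp
  also have "{1..k} \<inter> {x, x'} = {x, x'}" using x by auto
  finally have "measure_pmf.expectation (pmf_of_set {1..k}) e = card {x, x'} * \<epsilon> / k"
    using k by (simp add: integral_pmf_of_set)
  also have "\<dots> \<le> 2 * \<epsilon> / k"
    using \<epsilon> by (intro divide_right_mono mult_right_mono) (auto simp: card_insert_if)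
  finally show ?thesis
    unfolding child_x' unfolding child_obs_def using \<epsilon>
    by (intro coupled_within_bind[where e = e] coupled_within_map coupled_e) (auto simp: e_def)
qed

text \<open>The probability that a Galton--Watson tree with Poisson(\<open>m\<close>) offspring survives
  to generation \<open>t\<close>.\<close>
primrec poisson_survival :: "real \<Rightarrow> nat \<Rightarrow> real" where
  "poisson_survival m 0 = 1"
| "poisson_survival m (Suc t) = 1 - exp (- m * poisson_survival m t)"

lemma poisson_survival_bounds:
  assumes "0 \<le> m"
  shows "0 \<le> poisson_survival m t" "poisson_survival m t \<le> 1"
proof (induction t)
  case (Suc t)
  have "0 \<le> m * poisson_survival m t" using Suc assms by simp
  then show "0 \<le> poisson_survival m (Suc t)" "poisson_survival m (Suc t) \<le> 1" by simp_all
qed simp_all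

lemma poisson_survival_tendsto_0:
  assumes "0 \<le> m" "m \<le> 1"
  shows "poisson_survival m \<longlonglongrightarrow> 0"
proof -
  let ?s = "poisson_survival m"
  have bounds: "0 \<le> ?s t" "?s t \<le> 1" for t
    using poisson_survival_bounds[OF assms(1)] by auto
  have "?s (Suc t) \<le> ?s t" for t
  proof -
    have "1 - m * ?s t \<le> exp (- (m * ?s t))"
      using exp_ge_add_one_self[of "- (m * ?s t)"] by simp
    moreover have "m * ?s t \<le> ?s t"
      using assms bounds[of t] by (simp add: mult_left_le_one_le)
    ultimately show ?thesis by simp
  qed
  then have "decseq ?s" by (rule decseq_SucI)
  moreover have "\<forall>t. 0 \<le> ?s t" using bounds by simp
  ultimately obtain L where L: "?s \<longlonglongrightarrow> L"
    by (rule decseq_convergent)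
  have "0 \<le> L" using L bounds by (intro LIMSEQ_le_const) auto
  have "(\<lambda>t. ?s (Suc t)) \<longlonglongrightarrow> 1 - exp (- m * L)"
    by (simp only: poisson_survival.simps) (intro tendsto_intros L)
  then have fixpoint: "L = 1 - exp (- m * L)"
    using LIMSEQ_unique[OF LIMSEQ_Suc[OF L]] by blast
  have "L = 0"
  proof (rule ccontr)
    assume "L \<noteq> 0"
    with fixpoint have "m * L \<noteq> 0" by auto
    then have "1 - m * L < exp (- (m * L))" by (simp add: exp_minus_greater)
    moreover have "m * L \<le> L" using assms \<open>0 \<le> L\<close> by (simp add: mult_left_le_one_le)
    ultimately show False using fixpoint by simp
  qed
  then show ?thesis using L by simp
qed

lemma coupled_within_P_obs:
  assumes "d > 0" "k \<ge> 2" "x \<in> {1..k}" "x' \<in> {1..k}"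
  shows "coupled_within (P_obs d k t x) (P_obs d k t x') (poisson_survival (2 * d / k) t)"
  using assms(3,4)
proof (induction t arbitrary: x x')
  case 0
  then show ?case using coupled_within_one by simp
next
  case (Suc t)
  let ?s = "poisson_survival (2 * d / k) t"
  define \<epsilon> where "\<epsilon> = 2 * ?s / k"
  have "0 \<le> ?s" "?s \<le> 1" using poisson_survival_bounds assms(1) by simp_all
  then have \<epsilon>: "0 \<le> \<epsilon>" "\<epsilon> \<le> 1"
    using assms(2) unfolding \<epsilon>_def by (simp_all add: field_simps)
  have children: "coupled_within (child_obs d k t x) (child_obs d k t x') \<epsilon>"
    unfolding \<epsilon>_def using Suc \<open>0 \<le> ?s\<close> \<open>?s \<le> 1\<close> by (intro coupled_within_child_obs) auto
  have power: "0 \<le> (1 - \<epsilon>) ^ n" "(1 - \<epsilon>) ^ n \<le> 1" for n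
    using \<epsilon> by (simp_all add: power_le_one)
  have "measure_pmf.expectation (poisson_pmf d) (\<lambda>n. 1 - (1 - \<epsilon>) ^ n)
      = 1 - measure_pmf.expectation (poisson_pmf d) (\<lambda>n. (1 - \<epsilon>) ^ n)"
    using power by (subst Bochner_Integration.integral_diff)
      (auto intro: measure_pmf.integrable_const_bound[where B=1])
  also have "\<dots> = poisson_survival (2 * d / k) (Suc t)"
    using assms(1) \<epsilon> by (simp add: expectation_poisson_power \<epsilon>_def)
  finally have "measure_pmf.expectation (poisson_pmf d) (\<lambda>n. 1 - (1 - \<epsilon>) ^ n)
      \<le> poisson_survival (2 * d / k) (Suc t)" by simp
  then show ?case
    unfolding P_obs_Suc using power \<epsilon>
    by (intro coupled_within_bind[where e = "\<lambda>n. 1 - (1 - \<epsilon>) ^ n"] coupled_within_map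
        coupled_within_replicate children) auto
qed

theorem mainTheorem10:
  fixes k :: nat and d :: real
  assumes "k \<ge> 2" and "d > 0" and "2 * d / real k \<le> 1"
  shows "(\<lambda>t. Max {tv_dist (P_obs d k t x) (P_obs d k t x') | x x'. x \<in> {1..k} \<and> x' \<in> {1..k}})
           \<longlonglongrightarrow> 0"
proof -
  let ?tv = "\<lambda>t (x, x'). tv_dist (P_obs d k t x) (P_obs d k t x')"
  let ?s = "poisson_survival (2 * d / k)"
  have range: "{tv_dist (P_obs d k t x) (P_obs d k t x') | x x'. x \<in> {1..k} \<and> x' \<in> {1..k}}
      = ?tv t ` ({1..k} \<times> {1..k})" for t
    by fast
  have labels: "{1..k} \<times> {1..k} \<noteq> {}" using assms(1) by auto
  have lower: "0 \<le> Max (?tv t ` ({1..k} \<times> {1..k}))" for t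
    using labels by (auto simp: Max_ge_iff tv_dist_nonneg)
  have upper: "Max (?tv t ` ({1..k} \<times> {1..k})) \<le> ?s t" for t
    using labels assms(1,2)
    by (auto simp: Max_le_iff intro!: tv_dist_le_if_coupled_within coupled_within_P_obs)
  show ?thesis
    unfolding range
  proof (rule tendsto_sandwich[of "\<lambda>_. 0" _ _ ?s])
    show "\<forall>\<^sub>F t in sequentially. 0 \<le> Max (?tv t ` ({1..k} \<times> {1..k}))"
      using lower by simp
    show "\<forall>\<^sub>F t in sequentially. Max (?tv t ` ({1..k} \<times> {1..k})) \<le> ?s t"
      using upper by simp
    show "?s \<longlonglongrightarrow> 0"
      using assms by (intro poisson_survival_tendsto_0) auto
  qed simp
qed

end
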